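(* Let $m$ be a positive integer and let $d$ be an integer with $1\le d\le m$ (as specified in the context), and $t=2^{d-1}$. Let $A=e^{-t(I-\mathbf{G})}$ be the matrix indexed by $\mathrm{RM}(m,d)$ as defined in the context, $n=|\mathrm{RM}(m,d)|$, and $\delta=2^{-m/2}$. Then the semidefinite program $$\max\ \mathbb{E}_{f}\Big\langle w_f,\sum_{g}A_{f,g}w_g\Big\rangle\quad\text{s.t.}\quad \mathbb{E}_f\langle w_f,w_f\rangle=1,\quad \mathbb{E}_{f,g}|\langle w_f,w_g\rangle|\le\delta,$$ over vectors $\{w_f\}_{f\in\mathrm{RM}(m,d)}$ in a real inner product space (expectations over uniform $f,g\in\mathrm{RM}(m,d)$), has a feasible solution of value $1/e$.
   Context: $\mathrm{RM}(m,d)$ is the Reed–Muller code: the set of functions $\mathbb{F}_2^m\to\mathbb{F}_2$ given by polynomials of total degree $\le d$ in $m$ variables over $\mathbb{F}_2$, so $n=2^{\sum_{r\le d}\binom{m}{r}}$. Let $T$ be the set of functions $\mathbb{F}_2^m\to\mathbb{F}_2$ that are products of exactly $d$ linearly independent affine forms. $G$ is the Cayley graph on $\mathrm{RM}(m,d)$ with generating set $T$, and $\mathbf{G}$ its probability transition matrix: $\mathbf{G}_{f,g}=1/|T|$ if $f-g\in T$ and $0$ otherwise. $A=e^{-t(I-\mathbf{G})}$. In the paper the parameters are: $\eta=\delta^{1/(4\log_2 3)}$, $\varepsilon_2=\min\{\varepsilon_1,1/20\}$ where $\varepsilon_1>0$ is the absolute constant from the Reed–Muller testing theorem of Bhattacharyya–Kopparty–Schoenebeck–Sudan–Zuckerman,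 $d=\log_2\log_2(1/\eta)+\log_2(1/\varepsilon_2)-1$ (assumed to be an integer), $t=2^{d-1}$, $k=n/2^{m/2}$, so $\delta=k/n$. *)

theory Defs
  imports "HOL-Analysis.Analysis" "HOL-Library.Z2"
begin

text \<open>Points of F_2^m: maps nat => bit vanishing at coordinates >= m.
  Functions F_2^m -> F_2 are maps on all of nat => bit, normalised to 0 off the cube.\<close>

definition cube :: "nat \<Rightarrow> (nat \<Rightarrow> bit) set" where
  "cube m = {x. \<forall>i\<ge>m. x i = 0}"

type_synonym bfun = "(nat \<Rightarrow> bit) \<Rightarrow> bit"

definition RM :: "nat \<Rightarrow> nat \<Rightarrow> bfun set" where
  "RM m d = {f. \<exists>c :: nat set \<Rightarrow> bit.
     (\<forall>S. c S \<noteq> 0 \<longrightarrow> S \<subseteq> {..<m} \<and> card S \<le> d) \<and>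
     (\<forall>x. f x = (if x \<in> cube m then (\<Sum>S\<in>Pow {..<m}. c S * (\<Prod>i\<in>S. x i)) else 0))}"

text \<open>T: products of exactly d affine forms b_j + sum_i a_j_i x_i whose linear parts
  a_0,...,a_(d-1) are linearly independent over F_2 (no nonempty subfamily sums to 0).\<close>
definition Tgen :: "nat \<Rightarrow> nat \<Rightarrow> bfun set" where
  "Tgen m d = {f. \<exists>(a :: nat \<Rightarrow> nat \<Rightarrow> bit) (b :: nat \<Rightarrow> bit).
     (\<forall>J\<subseteq>{..<d}. J \<noteq> {} \<longrightarrow> (\<exists>i<m. (\<Sum>j\<in>J. a j i) \<noteq> 0)) \<and>
     (\<forall>x. f x = (if x \<in> cube m then (\<Prod>j<d. b j + (\<Sum>i<m. a j i * x i)) else 0))}"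

definition Gmat :: "nat \<Rightarrow> nat \<Rightarrow> bfun \<Rightarrow> bfun \<Rightarrow> real" where
  "Gmat m d f g = (if (\<lambda>x. f x - g x) \<in> Tgen m d then 1 / real (card (Tgen m d)) else 0)"

definition mmult :: "'a set \<Rightarrow> ('a \<Rightarrow> 'a \<Rightarrow> real) \<Rightarrow> ('a \<Rightarrow> 'a \<Rightarrow> real) \<Rightarrow> 'a \<Rightarrow> 'a \<Rightarrow> real" where
  "mmult R X Y f g = (\<Sum>h\<in>R. X f h * Y h g)"

definition mone :: "'a \<Rightarrow> 'a \<Rightarrow> real" where
  "mone f g = (if f = g then 1 else 0)"

fun mpow :: "'a set \<Rightarrow> ('a \<Rightarrow> 'a \<Rightarrow> real) \<Rightarrow> nat \<Rightarrow> 'a \<Rightarrow> 'a \<Rightarrow> real" where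
  "mpow R X 0 = mone"
| "mpow R X (Suc k) = mmult R X (mpow R X k)"

definition mexp :: "'a set \<Rightarrow> ('a \<Rightarrow> 'a \<Rightarrow> real) \<Rightarrow> 'a \<Rightarrow> 'a \<Rightarrow> real" where
  "mexp R X f g = (\<Sum>k. mpow R X k f g / fact k)"

definition Amat :: "nat \<Rightarrow> nat \<Rightarrow> real \<Rightarrow> bfun \<Rightarrow> bfun \<Rightarrow> real" where
  "Amat m d t = mexp (RM m d) (\<lambda>f g. - t * (mone f g - Gmat m d f g))"

end

theory Submission
  imports Defs
begin

text \<open>
  For a point x of the cube, the vector g \<mapsto> (-1)^g(x) on RM(m,d) is an eigenvector of the
  random walk G. Indeed, T is invariant under translations of the cube, so the sum over
  \<tau> \<in> T of (-1)^\<tau>(x) does not depend on x; averaging over x, it is |T| (1 - 2^(1-d)),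
  because a product of d independent affine forms equals 1 on exactly a 2^(-d) fraction of the
  cube. Hence these vectors are eigenvectors of A = exp(-t(I - G)) with eigenvalue
  exp(-t 2^(1-d)) = 1/e. Taking for w_f the normalised vector x \<mapsto> (-1)^f(x) / 2^(m/2), the
  value of the program is 1/e, and \<langle>w_f, w_g\<rangle> is the bias of f + g. For d \<ge> 1 the
  characters of distinct points are orthogonal on RM(m,d), so the squared biases sum to
  |RM(m,d)| / 2^m, and Cauchy-Schwarz bounds the mean absolute bias by 2^(-m/2) = \<delta>.
\<close>

section \<open>Characters and sums over the cube\<close>

text \<open>Keep bit arithmetic in field form instead of the library's xor/and normal form.\<close>
declare add_bit_eq_xor [simp del] mult_bit_eq_and [simp del]

definition sgn_bit :: "bit \<Rightarrow> real" where
  "sgn_bit b = (if b = 0 then 1 else -1)"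

lemma sgn_bit_simps [simp]: "sgn_bit 0 = 1" "sgn_bit 1 = -1"
  by (simp_all add: sgn_bit_def)

lemma sgn_bit_add: "sgn_bit (a + b) = sgn_bit a * sgn_bit b"
  by (cases a; cases b) simp_all

lemma sgn_bit_mult_self [simp]: "sgn_bit a * sgn_bit a = 1"
  by (cases a) simp_all

lemma sgn_bit_sum: "finite J \<Longrightarrow> sgn_bit (\<Sum>j\<in>J. z j) = (\<Prod>j\<in>J. sgn_bit (z j))"
proof (induction J rule: finite_induct)
  case (insert j J)
  then show ?case by (simp add: sgn_bit_add)
qed simp

lemma sgn_bit_eq_one_minus_indicator: "sgn_bit b = 1 - 2 * of_bool (b = 1)"
  by (cases b) simp_all

lemma sum_eq_0_if_sign_reversing_involution:
  fixes F :: "'a \<Rightarrow> real"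
  assumes "\<And>a. a \<in> A \<Longrightarrow> \<sigma> a \<in> A" "\<And>a. a \<in> A \<Longrightarrow> \<sigma> (\<sigma> a) = a"
    and "\<And>a. a \<in> A \<Longrightarrow> F (\<sigma> a) = - F a"
  shows "sum F A = 0"
proof -
  have "sum F A = sum (\<lambda>a. - F a) A"
    by (rule sum.reindex_bij_witness[of _ \<sigma> \<sigma>]) (use assms in auto)
  then show ?thesis by (simp add: sum_negf)
qed

lemma finite_UNIV_bit [simp]: "finite (UNIV :: bit set)"
proof -
  have "(UNIV :: bit set) = {0, 1}" by (auto intro: bit.exhaust)
  then show ?thesis by (metis finite.emptyI finite_insert)
qed

lemma finite_cube: "finite (cube m)"
proof (rule finite_subset)
  show "cube m \<subseteq> (\<lambda>g i. if i < m then g i else 0) ` ({..<m} \<rightarrow>\<^sub>E UNIV)"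
    by (rule subsetI, rule_tac x="restrict x {..<m}" in image_eqI) (auto simp: cube_def)
qed (intro finite_imageI finite_PiE; simp)

lemma card_cube: "card (cube m) = 2 ^ m"
proof -
  have "bij_betw (\<lambda>x. {i. x i = 1}) (cube m) (Pow {..<m})"
    by (rule bij_betwI[where g="\<lambda>S i. if i \<in> S then 1 else 0"])
      (auto simp: cube_def fun_eq_iff not_less[symmetric])
  then show ?thesis by (simp add: bij_betw_same_card card_Pow)
qed

lemma add_in_cube: "x \<in> cube m \<Longrightarrow> v \<in> cube m \<Longrightarrow> (\<lambda>i. x i + v i) \<in> cube m"
  by (simp add: cube_def)

lemma sum_cube_sgn_bit_linear:
  "(\<Sum>y\<in>cube m. sgn_bit (\<Sum>i<m. c i * y i)) = (if \<forall>i<m. c i = 0 then 2 ^ m else 0)"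
proof (cases "\<forall>i<m. c i = 0")
  case True
  then show ?thesis by (simp add: card_cube)
next
  case False
  then obtain i0 where i0: "i0 < m" "c i0 \<noteq> 0" by blast
  have "(\<Sum>y\<in>cube m. sgn_bit (\<Sum>i<m. c i * y i)) = 0"
  proof (rule sum_eq_0_if_sign_reversing_involution[where \<sigma>="\<lambda>y. y(i0 := y i0 + 1)"])
    fix y assume "y \<in> cube m"
    then show "y(i0 := y i0 + 1) \<in> cube m" using i0 by (simp add: cube_def)
    show "(y(i0 := y i0 + 1))(i0 := (y(i0 := y i0 + 1)) i0 + 1) = y"
      by (simp add: add.assoc)
    have "(\<Sum>i<m. c i * (y(i0 := y i0 + 1)) i) = (\<Sum>i<m. c i * y i + (if i = i0 then 1 else 0))"
      using i0 by (intro sum.cong) (auto simp: distrib_left)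
    also have "\<dots> = (\<Sum>i<m. c i * y i) + 1"
      using i0 by (simp add: sum.distrib)
    finally show "sgn_bit (\<Sum>i<m. c i * (y(i0 := y i0 + 1)) i) = - sgn_bit (\<Sum>i<m. c i * y i)"
      by (simp add: sgn_bit_add)
  qed
  with False show ?thesis by simp
qed

section \<open>The Reed-Muller code\<close>

definition on_cube :: "nat \<Rightarrow> bfun \<Rightarrow> bfun" where
  "on_cube m p x = (if x \<in> cube m then p x else 0)"

definition multilinear :: "nat \<Rightarrow> (nat set \<Rightarrow> bit) \<Rightarrow> (nat \<Rightarrow> bit) \<Rightarrow> bit" where
  "multilinear m c x = (\<Sum>S\<in>Pow {..<m}. c S * (\<Prod>i\<in>S. x i))"

definition degree_le :: "nat \<Rightarrow> nat \<Rightarrow> (nat set \<Rightarrow> bit) \<Rightarrow> bool" where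
  "degree_le m d c \<longleftrightarrow> (\<forall>S. c S \<noteq> 0 \<longrightarrow> S \<subseteq> {..<m} \<and> card S \<le> d)"

lemma on_cube_in_RM_iff:
  "on_cube m p \<in> RM m d \<longleftrightarrow> (\<exists>c. degree_le m d c \<and> (\<forall>x\<in>cube m. p x = multilinear m c x))"
  unfolding RM_def on_cube_def degree_le_def multilinear_def by (auto simp: fun_eq_iff)

lemma RM_vanishes_off_cube: "f \<in> RM m d \<Longrightarrow> x \<notin> cube m \<Longrightarrow> f x = 0"
  unfolding RM_def by auto

lemma on_cube_RM: "f \<in> RM m d \<Longrightarrow> on_cube m f = f"
  by (auto simp: fun_eq_iff on_cube_def RM_vanishes_off_cube)

lemma degree_le_mono: "degree_le m d c \<Longrightarrow> d \<le> d' \<Longrightarrow> degree_le m d' c"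
  unfolding degree_le_def by (meson le_trans)

lemma RM_mono: "f \<in> RM m d \<Longrightarrow> d \<le> d' \<Longrightarrow> f \<in> RM m d'"
  using on_cube_in_RM_iff[of m f] degree_le_mono by (metis on_cube_RM)

lemma on_cube_add_in_RM:
  assumes "on_cube m p \<in> RM m d" "on_cube m q \<in> RM m d"
  shows "on_cube m (\<lambda>x. p x + q x) \<in> RM m d"
proof -
  obtain c1 c2 where c: "degree_le m d c1" "\<forall>x\<in>cube m. p x = multilinear m c1 x"
    "degree_le m d c2" "\<forall>x\<in>cube m. q x = multilinear m c2 x"
    using assms by (auto simp: on_cube_in_RM_iff)
  have "degree_le m d (\<lambda>S. c1 S + c2 S)"
    using c unfolding degree_le_def by (metis add_0)
  moreover have "multilinear m (\<lambda>S. c1 S + c2 S) x = multilinear m c1 x + multilinear m c2 x" for x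
    unfolding multilinear_def distrib_right by (rule sum.distrib)
  ultimately show ?thesis
    using c by (auto simp: on_cube_in_RM_iff)
qed

lemma RM_add:
  assumes "f \<in> RM m d" "g \<in> RM m d"
  shows "(\<lambda>x. f x + g x) \<in> RM m d"
proof -
  have "on_cube m (\<lambda>x. f x + g x) = (\<lambda>x. f x + g x)"
    using assms by (auto simp: fun_eq_iff on_cube_def RM_vanishes_off_cube)
  then show ?thesis
    using on_cube_add_in_RM[of m f d g] assms by (simp add: on_cube_RM)
qed

definition multilinear_mult :: "nat \<Rightarrow> (nat set \<Rightarrow> bit) \<Rightarrow> (nat set \<Rightarrow> bit) \<Rightarrow> nat set \<Rightarrow> bit" where
  "multilinear_mult m c1 c2 U =
     (\<Sum>S\<in>Pow {..<m}. \<Sum>T\<in>Pow {..<m}. if S \<union> T = U then c1 S * c2 T else 0)"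

lemma degree_le_multilinear_mult:
  assumes "degree_le m d1 c1" "degree_le m d2 c2"
  shows "degree_le m (d1 + d2) (multilinear_mult m c1 c2)"
  unfolding degree_le_def
proof (intro allI impI)
  fix U assume "multilinear_mult m c1 c2 U \<noteq> 0"
  then obtain S where S: "S \<in> Pow {..<m}"
    and ne: "(\<Sum>T\<in>Pow {..<m}. if S \<union> T = U then c1 S * c2 T else 0) \<noteq> 0"
    unfolding multilinear_mult_def by (rule sum.not_neutral_contains_not_neutral)
  from ne obtain T where T: "T \<in> Pow {..<m}" and "(if S \<union> T = U then c1 S * c2 T else 0) \<noteq> 0"
    by (rule sum.not_neutral_contains_not_neutral)
  then have U: "U = S \<union> T" and "c1 S \<noteq> 0" "c2 T \<noteq> 0"
    by (simp_all split: if_splits del: bit_not_zero_iff)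
  then have "card S \<le> d1" "card T \<le> d2"
    using assms unfolding degree_le_def by blast+
  with S T U card_Un_le[of S T] show "U \<subseteq> {..<m} \<and> card U \<le> d1 + d2"
    by auto
qed

lemma prod_Un_bit:
  "finite S \<Longrightarrow> finite T \<Longrightarrow> (\<Prod>i\<in>S. x i) * (\<Prod>i\<in>T. x i) = (\<Prod>i\<in>S \<union> T. (x i :: bit))"
proof -
  have prod_bit: "finite A \<Longrightarrow> (\<Prod>i\<in>A. x i) = (if \<forall>i\<in>A. x i = 1 then 1 else 0)" for A
    by (induction A rule: finite_induct) auto
  assume "finite S" "finite T"
  then show ?thesis by (auto simp: prod_bit)
qed

lemma multilinear_mult:
  "multilinear m c1 x * multilinear m c2 x = multilinear m (multilinear_mult m c1 c2) x"
proof -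
  let ?P = "Pow {..<m}" and ?x = "\<lambda>U. \<Prod>i\<in>U. x i"
  have "multilinear m c1 x * multilinear m c2 x = (\<Sum>S\<in>?P. \<Sum>T\<in>?P. c1 S * c2 T * ?x (S \<union> T))"
    unfolding multilinear_def sum_product
    by (intro sum.cong refl) (auto simp: prod_Un_bit[symmetric] finite_subset ac_simps)
  also have "\<dots> = (\<Sum>S\<in>?P. \<Sum>T\<in>?P. \<Sum>U\<in>?P. if S \<union> T = U then c1 S * c2 T * ?x U else 0)"
    by (intro sum.cong refl) auto
  also have "\<dots> = (\<Sum>U\<in>?P. \<Sum>S\<in>?P. \<Sum>T\<in>?P. if S \<union> T = U then c1 S * c2 T * ?x U else 0)"
    by (subst sum.swap, subst (2) sum.swap) (rule refl)
  also have "\<dots> = multilinear m (multilinear_mult m c1 c2) x"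
    unfolding multilinear_def multilinear_mult_def sum_distrib_right
    by (intro sum.cong refl) simp
  finally show ?thesis .
qed

lemma on_cube_mult_in_RM:
  assumes "on_cube m p \<in> RM m d1" "on_cube m q \<in> RM m d2"
  shows "on_cube m (\<lambda>x. p x * q x) \<in> RM m (d1 + d2)"
  using assms degree_le_multilinear_mult multilinear_mult
  unfolding on_cube_in_RM_iff by metis

lemma on_cube_const_in_RM: "on_cube m (\<lambda>x. b) \<in> RM m 0"
  unfolding on_cube_in_RM_iff
proof (intro exI conjI ballI)
  let ?c = "\<lambda>S. if S = {} then b else 0"
  show "degree_le m 0 ?c" by (simp add: degree_le_def)
  have "multilinear m ?c x = (\<Sum>S\<in>Pow {..<m}. if S = {} then b else 0)" for x
    unfolding multilinear_def by (intro sum.cong) auto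
  then show "b = multilinear m ?c x" for x by simp
qed

lemma on_cube_coordinate_in_RM: "i < m \<Longrightarrow> on_cube m (\<lambda>x. x i) \<in> RM m 1"
  unfolding on_cube_in_RM_iff
proof (intro exI conjI ballI)
  let ?c = "\<lambda>S. if S = {i} then 1 else 0"
  assume "i < m"
  then show "degree_le m 1 ?c" by (simp add: degree_le_def)
  have "multilinear m ?c x = (\<Sum>S\<in>Pow {..<m}. if S = {i} then x i else 0)" for x
    unfolding multilinear_def by (intro sum.cong) auto
  then show "x i = multilinear m ?c x" for x using \<open>i < m\<close> by simp
qed

lemma on_cube_linear_in_RM: "k \<le> m \<Longrightarrow> on_cube m (\<lambda>x. \<Sum>i<k. a i * x i) \<in> RM m 1"
proof (induction k)
  case 0
  then show ?case using RM_mono[OF on_cube_const_in_RM[of m 0]] by simp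
next
  case (Suc k)
  have "on_cube m (\<lambda>x. a k * x k) \<in> RM m (0 + 1)"
    using Suc.prems by (intro on_cube_mult_in_RM on_cube_const_in_RM on_cube_coordinate_in_RM) simp
  then have "on_cube m (\<lambda>x. (\<Sum>i<k. a i * x i) + a k * x k) \<in> RM m 1"
    using Suc by (intro on_cube_add_in_RM) simp_all
  then show ?case by (simp only: sum.lessThan_Suc)
qed

lemma on_cube_affine_in_RM: "on_cube m (\<lambda>x. b + (\<Sum>i<m. a i * x i)) \<in> RM m 1"
  using on_cube_add_in_RM[OF RM_mono[OF on_cube_const_in_RM[of m b]] on_cube_linear_in_RM[of m m a]]
  by simp

lemma on_cube_prod_in_RM:
  "(\<And>j. j < k \<Longrightarrow> on_cube m (l j) \<in> RM m 1) \<Longrightarrow> on_cube m (\<lambda>x. \<Prod>j<k. l j x) \<in> RM m k"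
proof (induction k)
  case 0
  then show ?case using on_cube_const_in_RM[of m 1] by simp
next
  case (Suc k)
  then have "on_cube m (\<lambda>x. (\<Prod>j<k. l j x) * l k x) \<in> RM m (k + 1)"
    by (intro on_cube_mult_in_RM) simp_all
  then show ?case by (simp only: prod.lessThan_Suc Suc_eq_plus1[symmetric])
qed

lemma Tgen_subset_RM: "Tgen m d \<subseteq> RM m d"
proof
  fix f assume "f \<in> Tgen m d"
  then obtain a b where "\<forall>x. f x = (if x \<in> cube m then \<Prod>j<d. b j + (\<Sum>i<m. a j i * x i) else 0)"
    unfolding Tgen_def by blast
  then have "f = on_cube m (\<lambda>x. \<Prod>j<d. b j + (\<Sum>i<m. a j i * x i))"
    by (simp add: on_cube_def fun_eq_iff)
  then show "f \<in> RM m d"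
    by (simp only: on_cube_prod_in_RM on_cube_affine_in_RM)
qed

lemma finite_RM: "finite (RM m d)"
proof (rule finite_subset)
  show "RM m d \<subseteq> (\<lambda>g x. if x \<in> cube m then g x else 0) ` (cube m \<rightarrow>\<^sub>E UNIV)"
    by (rule subsetI, rule_tac x="restrict x (cube m)" in image_eqI)
      (auto simp: fun_eq_iff RM_vanishes_off_cube)
qed (intro finite_imageI finite_PiE finite_cube; simp)

lemma finite_Tgen: "finite (Tgen m d)"
  using finite_subset[OF Tgen_subset_RM finite_RM] .

lemma zero_in_RM: "(\<lambda>x. 0) \<in> RM m d"
proof -
  have "on_cube m (\<lambda>x. 0) = (\<lambda>x. 0)" by (simp add: on_cube_def fun_eq_iff)
  then show ?thesis using RM_mono[OF on_cube_const_in_RM[of m 0]] by simp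
qed

lemma card_RM_pos: "card (RM m d) > 0"
  using zero_in_RM[of m d] finite_RM[of m d] by (auto simp: card_gt_0_iff)

section \<open>The generators: products of independent affine forms\<close>

lemma of_bool_prod_bit_eq_1:
  "of_bool ((\<Prod>j<d. l j) = (1 :: bit)) =
     (1 / 2) ^ d * (\<Sum>J\<in>Pow {..<d}. (-1) ^ card J * sgn_bit (\<Sum>j\<in>J. l j))"
proof -
  have "of_bool ((\<Prod>j<d. l j) = 1) = (\<Prod>j<d. of_bool (l j = 1) :: real)"
    by (induction d) auto
  also have "\<dots> = (\<Prod>j<d. (1 / 2) * (- sgn_bit (l j) + 1))"
    by (intro prod.cong refl) (simp add: sgn_bit_eq_one_minus_indicator)
  also have "\<dots> = (1 / 2) ^ d * (\<Prod>j<d. - sgn_bit (l j) + 1)"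
    by (simp only: prod.distrib prod_constant card_lessThan)
  also have "(\<Prod>j<d. - sgn_bit (l j) + 1) = (\<Sum>J\<in>Pow {..<d}. \<Prod>j\<in>J. - sgn_bit (l j))"
    by (subst prod_add) simp_all
  also have "\<dots> = (\<Sum>J\<in>Pow {..<d}. (-1) ^ card J * sgn_bit (\<Sum>j\<in>J. l j))"
    by (intro sum.cong refl) (auto simp: prod_uminus sgn_bit_sum finite_subset)
  finally show ?thesis .
qed

text \<open>
  Expanding the indicator in characters, only J = {} survives the sum over the cube, by the
  linear independence of the forms.
\<close>

lemma card_affine_product_eq_1:
  assumes indep: "\<forall>J\<subseteq>{..<d}. J \<noteq> {} \<longrightarrow> (\<exists>i<m. (\<Sum>j\<in>J. a j i) \<noteq> 0)"
  shows "real (card {y\<in>cube m. (\<Prod>j<d. b j + (\<Sum>i<m. a j i * y i)) = 1}) = 2 ^ m / 2 ^ d"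
proof -
  have affine_sum: "(\<Sum>j\<in>J. b j + (\<Sum>i<m. a j i * y i)) = (\<Sum>j\<in>J. b j) + (\<Sum>i<m. (\<Sum>j\<in>J. a j i) * y i)"
    for J y by (simp add: sum.distrib sum_distrib_right sum.swap[of _ J])
  have cube_sum: "(-1) ^ card J * (\<Sum>y\<in>cube m. sgn_bit (\<Sum>j\<in>J. b j + (\<Sum>i<m. a j i * y i))) =
      (if J = {} then 2 ^ m else 0)" if "J \<subseteq> {..<d}" for J
  proof -
    have "(\<Sum>y\<in>cube m. sgn_bit (\<Sum>j\<in>J. b j + (\<Sum>i<m. a j i * y i))) =
        sgn_bit (\<Sum>j\<in>J. b j) * (\<Sum>y\<in>cube m. sgn_bit (\<Sum>i<m. (\<Sum>j\<in>J. a j i) * y i))"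
      by (simp only: affine_sum sgn_bit_add sum_distrib_left)
    moreover have "(\<forall>i<m. (\<Sum>j\<in>J. a j i) = 0) \<longleftrightarrow> J = {}"
      using indep that by (metis sum.empty)
    ultimately show ?thesis
      by (simp add: sum_cube_sgn_bit_linear)
  qed
  have "real (card {y\<in>cube m. (\<Prod>j<d. b j + (\<Sum>i<m. a j i * y i)) = 1}) =
      (\<Sum>y\<in>cube m. of_bool ((\<Prod>j<d. b j + (\<Sum>i<m. a j i * y i)) = 1))"
    by (simp add: finite_cube Collect_conj_eq)
  also have "\<dots> = (1 / 2) ^ d * (\<Sum>J\<in>Pow {..<d}. (-1) ^ card J *
      (\<Sum>y\<in>cube m. sgn_bit (\<Sum>j\<in>J. b j + (\<Sum>i<m. a j i * y i))))"
    by (simp add: of_bool_prod_bit_eq_1 sum_distrib_left sum.swap[of _ "cube m"])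
  also have "\<dots> = (1 / 2) ^ d * (\<Sum>J\<in>Pow {..<d}. if J = {} then 2 ^ m else 0)"
    by (simp add: cube_sum)
  also have "\<dots> = 2 ^ m / 2 ^ d"
    by (simp add: power_divide)
  finally show ?thesis .
qed

definition translate :: "nat \<Rightarrow> (nat \<Rightarrow> bit) \<Rightarrow> bfun \<Rightarrow> bfun" where
  "translate m v f = on_cube m (\<lambda>y. f (\<lambda>i. y i + v i))"

lemma translate_in_Tgen:
  assumes "\<tau> \<in> Tgen m d" "v \<in> cube m"
  shows "translate m v \<tau> \<in> Tgen m d"
proof -
  obtain a b where indep: "\<forall>J\<subseteq>{..<d}. J \<noteq> {} \<longrightarrow> (\<exists>i<m. (\<Sum>j\<in>J. a j i) \<noteq> 0)"
    and \<tau>: "\<forall>x. \<tau> x = (if x \<in> cube m then \<Prod>j<d. b j + (\<Sum>i<m. a j i * x i) else 0)"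
    using assms(1) unfolding Tgen_def by blast
  define b' where "b' j = b j + (\<Sum>i<m. a j i * v i)" for j
  have "b j + (\<Sum>i<m. a j i * (y i + v i)) = b' j + (\<Sum>i<m. a j i * y i)" for j y
    by (simp add: b'_def distrib_left sum.distrib ac_simps)
  then have "\<forall>y. translate m v \<tau> y =
      (if y \<in> cube m then \<Prod>j<d. b' j + (\<Sum>i<m. a j i * y i) else 0)"
    using \<tau> assms(2) by (simp add: translate_def on_cube_def add_in_cube)
  with indep show ?thesis
    unfolding Tgen_def by blast
qed

lemma translate_translate:
  assumes "f \<in> RM m d" "v \<in> cube m"
  shows "translate m v (translate m v f) = f"
  using assms
  by (auto simp: fun_eq_iff translate_def on_cube_def add.assoc add_in_cube RM_vanishes_off_cube)

lemma sum_Tgen_sgn_bit_translation_invariant: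
  assumes "x \<in> cube m" "x0 \<in> cube m"
  shows "(\<Sum>\<tau>\<in>Tgen m d. sgn_bit (\<tau> x)) = (\<Sum>\<tau>\<in>Tgen m d. sgn_bit (\<tau> x0))"
proof -
  define v where "v = (\<lambda>i. x i + x0 i)"
  have v: "v \<in> cube m" using add_in_cube[OF assms] by (simp add: v_def)
  have x0v: "(\<lambda>i. x0 i + v i) = x"
    by (simp add: fun_eq_iff v_def add.left_commute)
  have "translate m v (translate m v \<tau>) = \<tau>" "translate m v \<tau> \<in> Tgen m d"
    if "\<tau> \<in> Tgen m d" for \<tau>
    using that v Tgen_subset_RM by (blast intro: translate_translate translate_in_Tgen)+
  moreover have "translate m v \<tau> x0 = \<tau> x" for \<tau>
    using assms(2) x0v by (simp add: translate_def on_cube_def)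
  ultimately show ?thesis
    by (intro sum.reindex_bij_witness[of _ "translate m v" "translate m v"]) auto
qed

lemma sum_cube_sgn_bit_Tgen:
  assumes "\<tau> \<in> Tgen m d"
  shows "(\<Sum>y\<in>cube m. sgn_bit (\<tau> y)) = 2 ^ m * (1 - 2 / 2 ^ d)"
proof -
  obtain a b where indep: "\<forall>J\<subseteq>{..<d}. J \<noteq> {} \<longrightarrow> (\<exists>i<m. (\<Sum>j\<in>J. a j i) \<noteq> 0)"
    and \<tau>: "\<forall>x. \<tau> x = (if x \<in> cube m then \<Prod>j<d. b j + (\<Sum>i<m. a j i * x i) else 0)"
    using assms unfolding Tgen_def by blast
  have "(\<Sum>y\<in>cube m. sgn_bit (\<tau> y)) = (\<Sum>y\<in>cube m. 1 - 2 * of_bool (\<tau> y = 1))"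
    by (simp add: sgn_bit_eq_one_minus_indicator)
  also have "\<dots> = 2 ^ m - 2 * real (card {y\<in>cube m. \<tau> y = 1})"
    by (simp add: sum_subtractf sum_distrib_left[symmetric] card_cube finite_cube Collect_conj_eq)
  also have "{y\<in>cube m. \<tau> y = 1} = {y\<in>cube m. (\<Prod>j<d. b j + (\<Sum>i<m. a j i * y i)) = 1}"
    using \<tau> by auto
  also have "real (card \<dots>) = 2 ^ m / 2 ^ d"
    by (rule card_affine_product_eq_1[OF indep])
  finally show ?thesis
    by (simp add: algebra_simps)
qed

lemma sum_Tgen_sgn_bit:
  assumes "x \<in> cube m"
  shows "(\<Sum>\<tau>\<in>Tgen m d. sgn_bit (\<tau> x)) = real (card (Tgen m d)) * (1 - 2 / 2 ^ d)"
proof -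
  have "2 ^ m * (\<Sum>\<tau>\<in>Tgen m d. sgn_bit (\<tau> x)) = (\<Sum>y\<in>cube m. \<Sum>\<tau>\<in>Tgen m d. sgn_bit (\<tau> y))"
    using sum_Tgen_sgn_bit_translation_invariant[OF _ assms] by (simp add: card_cube)
  also have "\<dots> = (\<Sum>\<tau>\<in>Tgen m d. 2 ^ m * (1 - 2 / 2 ^ d))"
    by (subst sum.swap) (simp add: sum_cube_sgn_bit_Tgen)
  finally show ?thesis by simp
qed

lemma Tgen_nonempty:
  assumes "d \<le> m"
  shows "Tgen m d \<noteq> {}"
proof -
  define a :: "nat \<Rightarrow> nat \<Rightarrow> bit" where "a j i = of_bool (i = j)" for j i
  have "\<exists>i<m. (\<Sum>j\<in>J. a j i) \<noteq> 0" if "J \<subseteq> {..<d}" "J \<noteq> {}" for J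
  proof -
    obtain j where "j \<in> J" using \<open>J \<noteq> {}\<close> by blast
    moreover have "finite J" using that(1) finite_subset by blast
    ultimately have "(\<Sum>j'\<in>J. a j' j) = 1" by (simp add: a_def sum.delta)
    then show ?thesis using \<open>j \<in> J\<close> that(1) assms by (intro exI[of _ j]) auto
  qed
  then have "(\<lambda>x. if x \<in> cube m then \<Prod>j<d. 0 + (\<Sum>i<m. a j i * x i) else 0) \<in> Tgen m d"
    unfolding Tgen_def by (intro CollectI exI[of _ a] exI[of _ "\<lambda>j. 0"] conjI allI impI refl)
  then show ?thesis by blast
qed

lemma Gmat_sgn_bit_eigenvector:
  assumes f: "f \<in> RM m d" and x: "x \<in> cube m" and "d \<le> m"
  shows "(\<Sum>g\<in>RM m d. Gmat m d f g * sgn_bit (g x)) = (1 - 2 / 2 ^ d) * sgn_bit (f x)"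
proof -
  let ?T = "Tgen m d" and ?R = "RM m d"
  have "(\<Sum>g\<in>?R. Gmat m d f g * sgn_bit (g x)) =
      (\<Sum>g\<in>?R. if (\<lambda>y. f y - g y) \<in> ?T then sgn_bit (g x) / card ?T else 0)"
    by (intro sum.cong refl) (simp add: Gmat_def)
  also have "\<dots> = (\<Sum>g\<in>{g\<in>?R. (\<lambda>y. f y - g y) \<in> ?T}. sgn_bit (g x) / card ?T)"
    by (rule sum.inter_filter[OF finite_RM, symmetric])
  also have "\<dots> = (\<Sum>\<tau>\<in>?T. sgn_bit (f x + \<tau> x) / card ?T)"
  proof (rule sum.reindex_bij_witness[of _ "\<lambda>\<tau> y. f y + \<tau> y" "\<lambda>g y. f y - g y"])
    show "(\<lambda>y. f y + \<tau> y) \<in> {g\<in>?R. (\<lambda>y. f y - g y) \<in> ?T}" if "\<tau> \<in> ?T" for \<tau>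
      using that f Tgen_subset_RM by (auto simp: add.assoc[symmetric] intro: RM_add)
  qed (auto simp: add.assoc[symmetric])
  also have "\<dots> = sgn_bit (f x) * (\<Sum>\<tau>\<in>?T. sgn_bit (\<tau> x)) / card ?T"
    by (simp add: sgn_bit_add sum_distrib_left sum_divide_distrib)
  also have "\<dots> = (1 - 2 / 2 ^ d) * sgn_bit (f x)"
    using Tgen_nonempty[OF \<open>d \<le> m\<close>] finite_Tgen by (simp add: sum_Tgen_sgn_bit[OF x])
  finally show ?thesis .
qed

section \<open>Matrix powers and the matrix exponential\<close>

lemma sum_mone_mult: "finite R \<Longrightarrow> f \<in> R \<Longrightarrow> (\<Sum>g\<in>R. mone f g * \<phi> g) = \<phi> f"
  by (simp add: mone_def if_distrib[of "\<lambda>u. u * _"] cong: if_cong)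

lemma abs_mpow_le:
  fixes X :: "'a \<Rightarrow> 'a \<Rightarrow> real" and c :: real
  assumes R: "finite R" and X: "\<And>f g. f \<in> R \<Longrightarrow> g \<in> R \<Longrightarrow> \<bar>X f g\<bar> \<le> c"
    and "f \<in> R" "g \<in> R"
  shows "\<bar>mpow R X k f g\<bar> \<le> (card R * c) ^ k"
  using \<open>f \<in> R\<close>
proof (induction k arbitrary: f)
  case 0
  then show ?case by (simp add: mone_def)
next
  case (Suc k)
  have c: "0 \<le> c" using X[OF Suc.prems Suc.prems] by linarith
  have "\<bar>mpow R X (Suc k) f g\<bar> \<le> (\<Sum>h\<in>R. \<bar>X f h\<bar> * \<bar>mpow R X k h g\<bar>)"
    by (simp add: mmult_def abs_mult[symmetric] sum_abs)
  also have "\<dots> \<le> (\<Sum>h\<in>R. c * (card R * c) ^ k)"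
    using X[OF Suc.prems] Suc.IH c by (intro sum_mono mult_mono) auto
  also have "\<dots> = (card R * c) ^ Suc k" by simp
  finally show ?case .
qed

lemma summable_mpow:
  fixes X :: "'a \<Rightarrow> 'a \<Rightarrow> real"
  assumes R: "finite R" and "f \<in> R" "g \<in> R"
  shows "summable (\<lambda>k. mpow R X k f g / fact k)"
proof -
  define c where "c = (\<Sum>f\<in>R. \<Sum>g\<in>R. \<bar>X f g\<bar>)"
  have X: "\<bar>X f' g'\<bar> \<le> c" if "f' \<in> R" "g' \<in> R" for f' g'
  proof -
    have "\<bar>X f' g'\<bar> \<le> (\<Sum>g\<in>R. \<bar>X f' g\<bar>)" using R that by (intro member_le_sum) auto
    also have "\<dots> \<le> c" unfolding c_def using R that by (intro member_le_sum sum_nonneg) auto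
    finally show ?thesis .
  qed
  show ?thesis
  proof (rule summable_comparison_test'[where N=0])
    show "summable (\<lambda>k. inverse (fact k) * (card R * c) ^ k)" by (rule summable_exp)
    show "norm (mpow R X k f g / fact k) \<le> inverse (fact k) * (card R * c) ^ k" for k
      using abs_mpow_le[OF R X assms(2,3), where k=k]
      by (simp add: divide_inverse abs_mult mult.commute mult_left_mono)
  qed
qed

lemma mpow_eigenvector:
  fixes X :: "'a \<Rightarrow> 'a \<Rightarrow> real"
  assumes R: "finite R" and eig: "\<And>f. f \<in> R \<Longrightarrow> (\<Sum>g\<in>R. X f g * \<phi> g) = \<mu> * \<phi> f"
    and "f \<in> R"
  shows "(\<Sum>g\<in>R. mpow R X k f g * \<phi> g) = \<mu> ^ k * \<phi> f"
  using \<open>f \<in> R\<close>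
proof (induction k arbitrary: f)
  case 0
  then show ?case using sum_mone_mult[OF R] by simp
next
  case (Suc k)
  have "(\<Sum>g\<in>R. mpow R X (Suc k) f g * \<phi> g) = (\<Sum>h\<in>R. X f h * (\<Sum>g\<in>R. mpow R X k h g * \<phi> g))"
    unfolding mpow.simps mmult_def sum_distrib_right sum_distrib_left
    by (subst sum.swap) (simp add: mult.assoc)
  also have "\<dots> = \<mu> ^ k * (\<Sum>h\<in>R. X f h * \<phi> h)"
    by (simp add: Suc.IH sum_distrib_left mult.left_commute)
  also have "\<dots> = \<mu> ^ Suc k * \<phi> f"
    by (simp add: eig[OF Suc.prems])
  finally show ?case .
qed

lemma mexp_eigenvector:
  fixes X :: "'a \<Rightarrow> 'a \<Rightarrow> real"
  assumes R: "finite R" and eig: "\<And>f. f \<in> R \<Longrightarrow> (\<Sum>g\<in>R. X f g * \<phi> g) = \<mu> * \<phi> f"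
    and f: "f \<in> R"
  shows "(\<Sum>g\<in>R. mexp R X f g * \<phi> g) = exp \<mu> * \<phi> f"
proof -
  have "(\<Sum>g\<in>R. mexp R X f g * \<phi> g) = (\<Sum>g\<in>R. \<Sum>k. mpow R X k f g / fact k * \<phi> g)"
    unfolding mexp_def using R f by (intro sum.cong refl suminf_mult2 summable_mpow) auto
  also have "\<dots> = (\<Sum>k. \<Sum>g\<in>R. mpow R X k f g / fact k * \<phi> g)"
    using R f by (intro suminf_sum[symmetric] summable_mult2 summable_mpow) auto
  also have "\<dots> = (\<Sum>k. \<mu> ^ k / fact k * \<phi> f)"
    using mpow_eigenvector[OF R eig f] by (simp add: sum_divide_distrib[symmetric])
  also have "\<dots> = exp \<mu> * \<phi> f"
  proof -
    have "(\<lambda>k. \<mu> ^ k / fact k) sums exp \<mu>"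
      using exp_converges[of \<mu>] by (simp add: divide_inverse mult.commute)
    then have "(\<lambda>k. \<mu> ^ k / fact k * \<phi> f) sums (exp \<mu> * \<phi> f)" by (rule sums_mult2)
    then show ?thesis by (rule sums_unique[symmetric])
  qed
  finally show ?thesis .
qed

lemma Amat_sgn_bit_eigenvector:
  assumes f: "f \<in> RM m d" and x: "x \<in> cube m" and "d \<le> m"
  shows "(\<Sum>g\<in>RM m d. Amat m d t f g * sgn_bit (g x)) = exp (- t * (2 / 2 ^ d)) * sgn_bit (f x)"
  unfolding Amat_def
proof (rule mexp_eigenvector[OF finite_RM _ f])
  fix f assume f: "f \<in> RM m d"
  have "(\<Sum>g\<in>RM m d. - t * (mone f g - Gmat m d f g) * sgn_bit (g x)) =
      - t * ((\<Sum>g\<in>RM m d. mone f g * sgn_bit (g x)) - (\<Sum>g\<in>RM m d. Gmat m d f g * sgn_bit (g x)))"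
    by (simp only: sum_subtractf[symmetric] sum_distrib_left left_diff_distrib mult.assoc)
  also have "\<dots> = - t * (2 / 2 ^ d) * sgn_bit (f x)"
    unfolding sum_mone_mult[OF finite_RM f] Gmat_sgn_bit_eigenvector[OF f x \<open>d \<le> m\<close>]
    by (simp add: algebra_simps)
  finally show "(\<Sum>g\<in>RM m d. - t * (mone f g - Gmat m d f g) * sgn_bit (g x)) =
      - t * (2 / 2 ^ d) * sgn_bit (f x)" .
qed

section \<open>The feasible solution\<close>

definition lin :: "nat \<Rightarrow> (nat \<Rightarrow> bit) \<Rightarrow> bfun" where
  "lin m x = on_cube m (\<lambda>y. \<Sum>i<m. x i * y i)"

lemma lin_in_RM: "1 \<le> d \<Longrightarrow> lin m x \<in> RM m d"
  unfolding lin_def by (rule RM_mono[OF on_cube_linear_in_RM[OF order_refl]])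

lemma inj_on_lin: "inj_on (lin m) (cube m)"
proof (rule inj_onI)
  fix x x' assume x: "x \<in> cube m" and x': "x' \<in> cube m" and eq: "lin m x = lin m x'"
  have "lin m z (\<lambda>k. of_bool (k = i)) = z i" if "i < m" for z i
  proof -
    have "(\<lambda>k. of_bool (k = i)) \<in> cube m" using that by (simp add: cube_def)
    then show ?thesis using that by (simp add: lin_def on_cube_def if_distrib[of "(*) _"] cong: if_cong)
  qed
  then show "x = x'"
    using x x' eq by (auto simp: fun_eq_iff cube_def) (metis not_less)
qed

lemma sum_RM_sgn_bit_orthogonal:
  assumes "1 \<le> d" "x \<in> cube m" "y \<in> cube m"
  shows "(\<Sum>s\<in>RM m d. sgn_bit (s x) * sgn_bit (s y)) = (if x = y then real (card (RM m d)) else 0)"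
proof (cases "x = y")
  case False
  then obtain i where i: "x i \<noteq> y i" by blast
  have "i < m"
  proof (rule ccontr)
    assume "\<not> i < m"
    then show False using i assms(2,3) by (simp add: cube_def)
  qed
  define c where "c = on_cube m (\<lambda>z. z i)"
  have c: "c \<in> RM m d"
    unfolding c_def using on_cube_coordinate_in_RM[OF \<open>i < m\<close>] assms(1) by (rule RM_mono)
  have "sgn_bit (c x) * sgn_bit (c y) = -1"
    using i assms by (cases "x i"; cases "y i") (simp_all add: c_def on_cube_def)
  then have "(\<Sum>s\<in>RM m d. sgn_bit (s x) * sgn_bit (s y)) = 0"
    using c by (intro sum_eq_0_if_sign_reversing_involution[where \<sigma>="\<lambda>s z. s z + c z"])
      (simp_all add: RM_add add.assoc sgn_bit_add mult_ac)
  with False show ?thesis by simp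
qed simp

definition bias :: "nat \<Rightarrow> bfun \<Rightarrow> real" where
  "bias m u = (\<Sum>x\<in>cube m. sgn_bit (u x)) / 2 ^ m"

lemma sum_bias_square:
  assumes "1 \<le> d"
  shows "(\<Sum>u\<in>RM m d. (bias m u)\<^sup>2) = card (RM m d) / 2 ^ m"
proof -
  have "(\<Sum>u\<in>RM m d. (bias m u)\<^sup>2) =
      (\<Sum>u\<in>RM m d. \<Sum>x\<in>cube m. \<Sum>y\<in>cube m. sgn_bit (u x) * sgn_bit (u y)) / (2 ^ m * 2 ^ m)"
    by (simp add: bias_def power2_eq_square sum_product sum_divide_distrib)
  also have "\<dots> =
      (\<Sum>x\<in>cube m. \<Sum>y\<in>cube m. \<Sum>u\<in>RM m d. sgn_bit (u x) * sgn_bit (u y)) / (2 ^ m * 2 ^ m)"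
    by (subst sum.swap, subst (2) sum.swap) (rule refl)
  also have "\<dots> = card (RM m d) / 2 ^ m"
    using assms by (simp add: sum_RM_sgn_bit_orthogonal finite_cube card_cube cong: sum.cong)
  finally show ?thesis .
qed

lemma sum_abs_bias_le:
  assumes "1 \<le> d"
  shows "(\<Sum>u\<in>RM m d. \<bar>bias m u\<bar>) \<le> card (RM m d) / sqrt (2 ^ m)"
proof (rule power2_le_imp_le)
  have "(\<Sum>u\<in>RM m d. \<bar>bias m u\<bar>)\<^sup>2 \<le> (\<Sum>u\<in>RM m d. \<bar>bias m u\<bar>\<^sup>2) * card (RM m d)"
    by (rule sum_squared_le_sum_of_squares)
  also have "\<dots> = (card (RM m d) / sqrt (2 ^ m))\<^sup>2"
    using sum_bias_square[OF assms] by (simp add: power_divide power2_eq_square)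
  finally show "(\<Sum>u\<in>RM m d. \<bar>bias m u\<bar>)\<^sup>2 \<le> (card (RM m d) / sqrt (2 ^ m))\<^sup>2" .
qed simp

lemma sum_abs_bias_add:
  assumes "f \<in> RM m d"
  shows "(\<Sum>g\<in>RM m d. \<bar>bias m (\<lambda>x. f x + g x)\<bar>) = (\<Sum>u\<in>RM m d. \<bar>bias m u\<bar>)"
  using assms
  by (intro sum.reindex_bij_witness[of _ "\<lambda>g x. f x + g x" "\<lambda>g x. f x + g x"])
    (auto simp: RM_add add.assoc[symmetric])

text \<open>
  char_vec m f is the vector x \<mapsto> (-1)^f(x) / 2^(m/2) indexed by the cube, transported into
  the coordinates RM m d along the injection x \<mapsto> lin m x.
\<close>

definition char_vec :: "nat \<Rightarrow> bfun \<Rightarrow> bfun \<Rightarrow> real" where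
  "char_vec m f h =
     (if h \<in> lin m ` cube m then sgn_bit (f (inv_into (cube m) (lin m) h)) / sqrt (2 ^ m) else 0)"

lemma char_vec_lin: "x \<in> cube m \<Longrightarrow> char_vec m f (lin m x) = sgn_bit (f x) / sqrt (2 ^ m)"
  by (simp add: char_vec_def inv_into_f_f[OF inj_on_lin])

lemma inner_char_vec:
  assumes "1 \<le> d"
  shows "(\<Sum>h\<in>RM m d. char_vec m f h * char_vec m g h) = bias m (\<lambda>x. f x + g x)"
proof -
  have "(\<Sum>h\<in>RM m d. char_vec m f h * char_vec m g h) =
      (\<Sum>h\<in>lin m ` cube m. char_vec m f h * char_vec m g h)"
    using assms lin_in_RM by (intro sum.mono_neutral_right finite_RM) (auto simp: char_vec_def)
  also have "\<dots> = (\<Sum>x\<in>cube m. sgn_bit (f x) * sgn_bit (g x) / 2 ^ m)"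
    by (simp add: sum.reindex[OF inj_on_lin] char_vec_lin)
  finally show ?thesis
    by (simp add: bias_def sgn_bit_add sum_divide_distrib)
qed

lemma inner_char_vec_self: "1 \<le> d \<Longrightarrow> (\<Sum>h\<in>RM m d. char_vec m f h * char_vec m f h) = 1"
  by (simp add: inner_char_vec bias_def card_cube)

lemma Amat_char_vec:
  assumes "1 \<le> d" "d \<le> m" "f \<in> RM m d"
  shows "(\<Sum>g\<in>RM m d. Amat m d t f g * char_vec m g h) = exp (- t * (2 / 2 ^ d)) * char_vec m f h"
proof (cases "h \<in> lin m ` cube m")
  case True
  then obtain x where x: "x \<in> cube m" and h: "h = lin m x" by blast
  then show ?thesis
    using Amat_sgn_bit_eigenvector[OF assms(3) x assms(2)]
    by (simp add: char_vec_lin sum_divide_distrib[symmetric])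
qed (simp add: char_vec_def)

lemma two_powr_neg_half: "2 powr (- real m / 2) = 1 / sqrt (2 ^ m)"
  by (simp add: powr_minus_divide powr_half_sqrt[symmetric] powr_realpow[symmetric] powr_powr)

theorem proposition1:
  fixes m d :: nat and t \<delta> :: real
  assumes "m \<ge> 1" and "1 \<le> d" and "d \<le> m"
    and "t = 2 ^ (d - 1)"
    and "\<delta> = 2 powr (- real m / 2)"
  shows "\<exists>w :: bfun \<Rightarrow> bfun \<Rightarrow> real.
    (let R = RM m d; n = real (card R); ip = (\<lambda>u v. \<Sum>h\<in>R. u h * v h) in
      (\<Sum>f\<in>R. ip (w f) (w f)) / n = 1 \<and>
      (\<Sum>f\<in>R. \<Sum>g\<in>R. \<bar>ip (w f) (w g)\<bar>) / n ^ 2 \<le> \<delta> \<and>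
      (\<Sum>f\<in>R. ip (w f) (\<lambda>h. \<Sum>g\<in>R. Amat m d t f g * w g h)) / n = exp (- 1))"
proof -
  let ?R = "RM m d" and ?w = "char_vec m"
  have n: "real (card ?R) > 0"
    using card_RM_pos by simp
  have eigenvalue: "exp (- t * (2 / 2 ^ d)) = exp (- 1)"
    using assms(2,4) by (cases d) simp_all
  have objective: "(\<Sum>h\<in>?R. ?w f h * (\<Sum>g\<in>?R. Amat m d t f g * ?w g h)) = exp (- 1)"
    if "f \<in> ?R" for f
    using inner_char_vec_self[OF assms(2), of m f]
    unfolding Amat_char_vec[OF assms(2,3) that] eigenvalue
    by (simp add: mult.left_commute flip: sum_distrib_left)
  have "\<delta> = 1 / sqrt (2 ^ m)"
    unfolding assms(5) by (rule two_powr_neg_half)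
  then have "(\<Sum>u\<in>?R. \<bar>bias m u\<bar>) \<le> card ?R * \<delta>"
    using sum_abs_bias_le[OF assms(2), of m] by simp
  then have correlation:
    "(\<Sum>f\<in>?R. \<Sum>g\<in>?R. \<bar>\<Sum>h\<in>?R. ?w f h * ?w g h\<bar>) \<le> \<delta> * (card ?R * card ?R)"
    using n by (simp add: inner_char_vec[OF assms(2)] sum_abs_bias_add mult_ac)
  show ?thesis
    using n objective correlation
    by (intro exI[of _ ?w])
      (simp add: Let_def inner_char_vec_self[OF assms(2)] power2_eq_square divide_le_eq)
qed

end
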